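(* Let $\mathcal O\subset\mathbb R^2$ be a connected open set and let $\mathcal M=(\mathcal O,\Gamma)$ be an affine surface. Suppose there exist pairwise distinct real linear functions $L_1,L_2,L_3$ such that $\{e^{L_1},e^{L_2},e^{L_3}\}$ is a basis of $\mathcal Q(\mathcal M)$. Then $\Gamma$ has constant Christoffel symbols (i.e. is Type $\mathcal A$), and $\Gamma$ is linearly equivalent to one of: $\Gamma_r^2(a_1,a_2)$ for some $a_1,a_2$ with $a_1+a_2\neq1$ and $a_1a_2\neq0$; $\Gamma_2^1(c)$ for some $c\notin\{-1,0\}$; or $\Gamma_2^0$.
   Context: An affine manifold $(M,\nabla)$ is a smooth manifold $M$ of dimension $m\ge 2$ with a torsion-free connection $\nabla$ on $TM$; in local coordinates $\nabla_{\partial_{x^i}}\partial_{x^j}=\Gamma_{ij}^k\partial_{x^k}$ (summation over repeated indices). The curvature is $R(X,Y)Z=\nabla_X\nabla_YZ-\nabla_Y\nabla_XZ-\nabla_{[X,Y]}Z$, the Ricci tensor is $\rho(Y,Z)=\mathrm{Tr}(X\mapsto R(X,Y)Z)$, and $\rho_s(X,Y)=\frac12(\rho(X,Y)+\rho(Y,X))$. The Hessian is $\mathcal H_\nabla f=(\partial_{x^i}\partial_{x^j}f-\Gamma_{ij}^k\partial_{x^k}f)\,dx^i\otimes dx^j$. The quasi-Einstein solution space is $\mathcal Q(M,\nabla)=\{f\in C^\infty(M):\mathcal H_\nabla f+\frac{1}{m-1}f\rho_s=0\}$. For real constants, $\Gamma(a,b,c,d,e,f)$ denotes the connection on (an open subset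 of) $\mathbb R^2$ whose Christoffel symbols in the standard coordinates $(x^1,x^2)$ are the constants $\Gamma_{11}^1=a$, $\Gamma_{11}^2=b$, $\Gamma_{12}^1=\Gamma_{21}^1=c$, $\Gamma_{12}^2=\Gamma_{21}^2=d$, $\Gamma_{22}^1=e$, $\Gamma_{22}^2=f$; multiplying $\Gamma(\dots)$ by a scalar multiplies all six entries. Two connections with constant Christoffel symbols are linearly equivalent if they differ by a linear change of coordinates, i.e. there is $T\in GL(2,\mathbb R)$ with $T^*\nabla_2=\nabla_1$. A real linear function is $L(x^1,x^2)=\alpha_1x^1+\alpha_2x^2$, $\alpha_i\in\mathbb R$. The specific connections: for $a_1+a_2\ne1$, $\Gamma_r^2(a_1,a_2):=\frac{1}{a_1+a_2-1}\Gamma(a_1^2+a_2-1,\ a_1^2-a_1,\ a_1a_2,\ a_1a_2,\ a_2^2-a_2,\ a_1+a_2^2-1)$; for $c\ne-1$, $\Gamma_2^1(c):=\Gamma(-1,0,c,0,0,1+2c)$; $\Gamma_2^0:=\Gamma(-1,0,0,0,0,1)$. *)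

theory Defs
  imports "HOL-Analysis.Analysis"
begin

text \<open>Points of R^2 are pairs (x1,x2); coordinate indices are 0 (for x1) and 1 (for x2).
A connection on an open set U is given by its Christoffel symbols
G i j k p = Gamma_{ij}^k(p).\<close>

definition pd :: "nat \<Rightarrow> (real \<times> real \<Rightarrow> real) \<Rightarrow> real \<times> real \<Rightarrow> real" where
  "pd i f p = (if i = 0 then deriv (\<lambda>t. f (t, snd p)) (fst p)
               else deriv (\<lambda>t. f (fst p, t)) (snd p))"

fun Ck_on :: "nat \<Rightarrow> (real \<times> real) set \<Rightarrow> (real \<times> real \<Rightarrow> real) \<Rightarrow> bool" where
  "Ck_on 0 U f = continuous_on U f"
| "Ck_on (Suc k) U f = ((\<forall>p\<in>U. f differentiable (at p)) \<and> Ck_on k U (pd 0 f) \<and> Ck_on k U (pd 1 f))"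

definition smooth_on2 :: "(real \<times> real) set \<Rightarrow> (real \<times> real \<Rightarrow> real) \<Rightarrow> bool" where
  "smooth_on2 U f = (\<forall>k. Ck_on k U f)"

text \<open>Curvature components: R(d_i,d_j)d_k = curv G i j k l d_l.\<close>
definition curv :: "(nat \<Rightarrow> nat \<Rightarrow> nat \<Rightarrow> real \<times> real \<Rightarrow> real) \<Rightarrow> nat \<Rightarrow> nat \<Rightarrow> nat \<Rightarrow> nat \<Rightarrow> real \<times> real \<Rightarrow> real" where
  "curv G i j k l p = pd i (G j k l) p - pd j (G i k l) p
     + (\<Sum>n<2. G j k n p * G i n l p - G i k n p * G j n l p)"

definition ricci :: "(nat \<Rightarrow> nat \<Rightarrow> nat \<Rightarrow> real \<times> real \<Rightarrow> real) \<Rightarrow> nat \<Rightarrow> nat \<Rightarrow> real \<times> real \<Rightarrow> real" where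
  "ricci G j k p = (\<Sum>i<2. curv G i j k i p)"

definition ricci_s :: "(nat \<Rightarrow> nat \<Rightarrow> nat \<Rightarrow> real \<times> real \<Rightarrow> real) \<Rightarrow> nat \<Rightarrow> nat \<Rightarrow> real \<times> real \<Rightarrow> real" where
  "ricci_s G j k p = (ricci G j k p + ricci G k j p) / 2"

definition hessian :: "(nat \<Rightarrow> nat \<Rightarrow> nat \<Rightarrow> real \<times> real \<Rightarrow> real) \<Rightarrow> (real \<times> real \<Rightarrow> real) \<Rightarrow> nat \<Rightarrow> nat \<Rightarrow> real \<times> real \<Rightarrow> real" where
  "hessian G f i j p = pd i (pd j f) p - (\<Sum>k<2. G i j k p * pd k f p)"

text \<open>Quasi-Einstein solution space for a surface (m = 2, so 1/(m-1) = 1).\<close>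
definition QE :: "(real \<times> real) set \<Rightarrow> (nat \<Rightarrow> nat \<Rightarrow> nat \<Rightarrow> real \<times> real \<Rightarrow> real) \<Rightarrow> (real \<times> real \<Rightarrow> real) set" where
  "QE U G = {f. smooth_on2 U f \<and>
     (\<forall>p\<in>U. \<forall>i<2. \<forall>j<2. hessian G f i j p + (1 / (2 - 1)) * f p * ricci_s G i j p = 0)}"

definition linf :: "real \<times> real \<Rightarrow> real \<times> real \<Rightarrow> real" where
  "linf u p = fst u * fst p + snd u * snd p"

definition Gam :: "real \<Rightarrow> real \<Rightarrow> real \<Rightarrow> real \<Rightarrow> real \<Rightarrow> real \<Rightarrow> nat \<Rightarrow> nat \<Rightarrow> nat \<Rightarrow> real" where
  "Gam a b c d e f i j k =
     (if i = 0 \<and> j = 0 then (if k = 0 then a else b)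
      else if i = 1 \<and> j = 1 then (if k = 0 then e else f)
      else (if k = 0 then c else d))"

definition Gamma_r2 :: "real \<Rightarrow> real \<Rightarrow> nat \<Rightarrow> nat \<Rightarrow> nat \<Rightarrow> real" where
  "Gamma_r2 a1 a2 i j k = (1 / (a1 + a2 - 1)) *
     Gam (a1^2 + a2 - 1) (a1^2 - a1) (a1 * a2) (a1 * a2) (a2^2 - a2) (a1 + a2^2 - 1) i j k"

definition Gamma_21 :: "real \<Rightarrow> nat \<Rightarrow> nat \<Rightarrow> nat \<Rightarrow> real" where
  "Gamma_21 c = Gam (-1) 0 c 0 0 (1 + 2 * c)"

definition Gamma_20 :: "nat \<Rightarrow> nat \<Rightarrow> nat \<Rightarrow> real" where
  "Gamma_20 = Gam (-1) 0 0 0 0 1"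

text \<open>Linear equivalence of constant connections: there is T in GL(2,R) (T k c = T^k_c,
coordinate change x^k = T^k_c y^c) with T^* nabla2 = nabla1, i.e.
sum_c C1_{ab}^c T^k_c = sum_{i,j} C2_{ij}^k T^i_a T^j_b.\<close>
definition lin_equiv :: "(nat \<Rightarrow> nat \<Rightarrow> nat \<Rightarrow> real) \<Rightarrow> (nat \<Rightarrow> nat \<Rightarrow> nat \<Rightarrow> real) \<Rightarrow> bool" where
  "lin_equiv C1 C2 = (\<exists>T :: nat \<Rightarrow> nat \<Rightarrow> real.
     T 0 0 * T 1 1 - T 0 1 * T 1 0 \<noteq> 0 \<and>
     (\<forall>a<2. \<forall>b<2. \<forall>k<2.
        (\<Sum>c<2. C1 a b c * T k c) = (\<Sum>i<2. \<Sum>j<2. C2 i j k * T i a * T j b)))"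

end

theory Submission
  imports Defs
begin

text \<open>At each point p, the equation for exp(L) with L = linf u reduces to the quadratic system
  u_a u_b = \<Sum>_c Gamma_{ab}^c(p) u_c - rho_s(a,b)(p), which is affine in the unknowns
  (Gamma_{ab}^0(p), Gamma_{ab}^1(p), rho_s(a,b)(p)). Three distinct solutions u_i of such a
  system are never collinear, so they determine Gamma(p) completely: Gamma is the same at
  every point. Finally, a linear change of coordinates moves the three exponents to a normal
  position, according to whether one of them is 0 (giving Gamma_2^0), two of them are
  linearly dependent (Gamma_2^1(c)), or none of these happens (Gamma_r^2(a_1,a_2)).\<close>

definition coord :: "real \<times> real \<Rightarrow> nat \<Rightarrow> real" where
  "coord v i = (if i = 0 then fst v else snd v)"

lemma sum_lessThan_2: "(\<Sum>k<(2::nat). f k) = (f 0 + f 1 :: real)"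
  by (simp add: numeral_2_eq_2)

lemma pd_exp_linf:
  assumes "i < 2"
  shows "pd i (\<lambda>p. c * exp (linf u p)) = (\<lambda>p. c * coord u i * exp (linf u p))"
proof
  fix p :: "real \<times> real"
  show "pd i (\<lambda>p. c * exp (linf u p)) p = c * coord u i * exp (linf u p)"
  proof (cases "i = 0")
    case True
    have "((\<lambda>t. c * exp (fst u * t + snd u * snd p)) has_real_derivative
           c * (exp (fst u * fst p + snd u * snd p) * fst u)) (at (fst p))"
      by (auto intro!: derivative_eq_intros)
    then show ?thesis
      using True by (simp add: DERIV_imp_deriv pd_def linf_def coord_def)
  next
    case False
    have "((\<lambda>t. c * exp (fst u * fst p + snd u * t)) has_real_derivative
           c * (exp (fst u * fst p + snd u * snd p) * snd u)) (at (snd p))"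
      by (auto intro!: derivative_eq_intros)
    then show ?thesis
      using False by (simp add: DERIV_imp_deriv pd_def linf_def coord_def)
  qed
qed

text \<open>exp (linf v) satisfies the quasi-Einstein equation at a point where the Christoffel symbols
  are C and the symmetric Ricci tensor is r. Treating r as an independent unknown makes the
  condition affine in (C, r).\<close>
definition qe_exponent ::
  "(nat \<Rightarrow> nat \<Rightarrow> nat \<Rightarrow> real) \<Rightarrow> (nat \<Rightarrow> nat \<Rightarrow> real) \<Rightarrow> real \<times> real \<Rightarrow> bool" where
  "qe_exponent C r v \<longleftrightarrow>
     (\<forall>a<2. \<forall>b<2. coord v a * coord v b = (\<Sum>c<2. C a b c * coord v c) - r a b)"

lemma qe_exponentD:
  assumes "qe_exponent C r v" "a < 2" "b < 2"
  shows "coord v a * coord v b = C a b 0 * fst v + C a b 1 * snd v - r a b"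
  using assms by (simp add: qe_exponent_def sum_lessThan_2 coord_def)

lemma qe_exponent_iff:
  "qe_exponent C r (x, y) \<longleftrightarrow>
     x * x = C 0 0 0 * x + C 0 0 1 * y - r 0 0 \<and>
     x * y = C 0 1 0 * x + C 0 1 1 * y - r 0 1 \<and>
     y * x = C 1 0 0 * x + C 1 0 1 * y - r 1 0 \<and>
     y * y = C 1 1 0 * x + C 1 1 1 * y - r 1 1"
  unfolding qe_exponent_def by (auto simp: less_2_cases_iff sum_lessThan_2 coord_def)

lemma qe_exponent_if_exp_linf_QE:
  assumes "(\<lambda>p. exp (linf u p)) \<in> QE U G" "p \<in> U"
  shows "qe_exponent (\<lambda>a b c. G a b c p) (\<lambda>a b. ricci_s G a b p) u"
  unfolding qe_exponent_def
proof (intro allI impI)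
  fix a b :: nat assume ab: "a < 2" "b < 2"
  have pd_exp: "pd k (\<lambda>p. exp (linf u p)) = (\<lambda>p. coord u k * exp (linf u p))" if "k < 2" for k
    using pd_exp_linf[OF that, of 1 u] by simp
  have "hessian G (\<lambda>p. exp (linf u p)) a b p
      = exp (linf u p) * (coord u a * coord u b - (\<Sum>c<2. G a b c p * coord u c))"
    using pd_exp_linf[OF ab(1)] by (simp add: hessian_def pd_exp ab sum_lessThan_2 algebra_simps)
  moreover have "hessian G (\<lambda>p. exp (linf u p)) a b p + exp (linf u p) * ricci_s G a b p = 0"
    using assms ab by (simp add: QE_def)
  ultimately have "exp (linf u p) *
      (coord u a * coord u b - (\<Sum>c<2. G a b c p * coord u c) + ricci_s G a b p) = 0"
    by (simp add: algebra_simps)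
  then show "coord u a * coord u b = (\<Sum>c<2. G a b c p * coord u c) - ricci_s G a b p"
    by simp
qed

definition det3 :: "real \<times> real \<Rightarrow> real \<times> real \<Rightarrow> real \<times> real \<Rightarrow> real" where
  "det3 v1 v2 v3 = fst v1 * (snd v2 - snd v3) + fst v2 * (snd v3 - snd v1) + fst v3 * (snd v1 - snd v2)"

lemma affine_form_eq_0_if_noncollinear:
  assumes "det3 v1 v2 v3 \<noteq> 0"
    and "fst v1 * b0 + snd v1 * b1 + g = 0"
    and "fst v2 * b0 + snd v2 * b1 + g = 0"
    and "fst v3 * b0 + snd v3 * b1 + g = 0"
  shows "b0 = 0 \<and> b1 = 0"
proof -
  have "b0 * det3 v1 v2 v3 = (snd v2 - snd v3) * (fst v1 * b0 + snd v1 * b1 + g)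
     + (snd v3 - snd v1) * (fst v2 * b0 + snd v2 * b1 + g)
     + (snd v1 - snd v2) * (fst v3 * b0 + snd v3 * b1 + g)"
   and "b1 * det3 v1 v2 v3 = (fst v3 - fst v2) * (fst v1 * b0 + snd v1 * b1 + g)
     + (fst v1 - fst v3) * (fst v2 * b0 + snd v2 * b1 + g)
     + (fst v2 - fst v1) * (fst v3 * b0 + snd v3 * b1 + g)"
    by (simp_all add: det3_def algebra_simps)
  then show ?thesis using assms by simp
qed

lemma distinct_collinear_not_two_coordinates_equal:
  fixes x1 y1 x2 y2 x3 y3 :: real
  assumes "(x1, y1) \<noteq> (x2, y2)" "(x1, y1) \<noteq> (x3, y3)" "(x2, y2) \<noteq> (x3, y3)"
    and "det3 (x1, y1) (x2, y2) (x3, y3) = 0"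
    and "x1 = x2 \<or> x2 = x3 \<or> x3 = x1"
  shows "y1 \<noteq> y2 \<and> y2 \<noteq> y3 \<and> y3 \<noteq> y1"
proof -
  have "x1 = x2 \<Longrightarrow> (x3 - x1) * (y1 - y2) = 0"
    and "x2 = x3 \<Longrightarrow> (x1 - x2) * (y2 - y3) = 0"
    and "x3 = x1 \<Longrightarrow> (x2 - x3) * (y3 - y1) = 0"
    using assms(4) by (simp_all add: det3_def algebra_simps)
  then show ?thesis using assms(1-3,5) by auto
qed

lemma qe_exponents_noncollinear:
  assumes "qe_exponent C r v1" "qe_exponent C r v2" "qe_exponent C r v3"
    and "v1 \<noteq> v2" "v1 \<noteq> v3" "v2 \<noteq> v3"
  shows "det3 v1 v2 v3 \<noteq> 0"
proof
  assume collinear: "det3 v1 v2 v3 = 0"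
  obtain x1 y1 x2 y2 x3 y3 where v: "v1 = (x1, y1)" "v2 = (x2, y2)" "v3 = (x3, y3)"
    by (cases v1, cases v2, cases v3) auto
  have x: "x1 * x1 = C 0 0 0 * x1 + C 0 0 1 * y1 - r 0 0"
      "x2 * x2 = C 0 0 0 * x2 + C 0 0 1 * y2 - r 0 0"
      "x3 * x3 = C 0 0 0 * x3 + C 0 0 1 * y3 - r 0 0"
   and y: "y1 * y1 = C 1 1 0 * x1 + C 1 1 1 * y1 - r 1 1"
      "y2 * y2 = C 1 1 0 * x2 + C 1 1 1 * y2 - r 1 1"
      "y3 * y3 = C 1 1 0 * x3 + C 1 1 1 * y3 - r 1 1"
    using assms(1-3) by (simp_all add: v qe_exponent_iff)
  text \<open>The Vandermonde products are multiples of the vanishing determinant.\<close>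
  have "(x1 - x2) * (x2 - x3) * (x3 - x1)
      = (x1 * x1) * (x3 - x2) + (x2 * x2) * (x1 - x3) + (x3 * x3) * (x2 - x1)"
    by algebra
  also have "\<dots> = C 0 0 1 * det3 v1 v2 v3"
    unfolding x by (simp add: v det3_def algebra_simps)
  finally have x_coincide: "x1 = x2 \<or> x2 = x3 \<or> x3 = x1"
    using collinear by simp
  have "(y1 - y2) * (y2 - y3) * (y3 - y1)
      = - ((y1 * y1) * (y2 - y3) + (y2 * y2) * (y3 - y1) + (y3 * y3) * (y1 - y2))"
    by algebra
  also have "\<dots> = - C 1 1 0 * det3 v1 v2 v3"
    unfolding y by (simp add: v det3_def algebra_simps)
  finally have "y1 = y2 \<or> y2 = y3 \<or> y3 = y1"
    using collinear by simp
  moreover have "y1 \<noteq> y2 \<and> y2 \<noteq> y3 \<and> y3 \<noteq> y1"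
    using assms(4-6) collinear x_coincide
    by (intro distinct_collinear_not_two_coordinates_equal) (simp_all add: v)
  ultimately show False
    by blast
qed

lemma qe_exponents_determine_symbols:
  assumes "det3 v1 v2 v3 \<noteq> 0"
    and "qe_exponent C r v1" "qe_exponent C r v2" "qe_exponent C r v3"
    and "qe_exponent C' r' v1" "qe_exponent C' r' v2" "qe_exponent C' r' v3"
    and "a < 2" "b < 2" "c < 2"
  shows "C a b c = C' a b c"
proof -
  have "fst v * (C a b 0 - C' a b 0) + snd v * (C a b 1 - C' a b 1) + (r' a b - r a b) = 0"
    if "qe_exponent C r v" "qe_exponent C' r' v" for v
    using qe_exponentD[OF that(1) assms(8,9)] qe_exponentD[OF that(2) assms(8,9)]
    by (simp add: algebra_simps)
  then have "C a b 0 - C' a b 0 = 0 \<and> C a b 1 - C' a b 1 = 0"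
    using affine_form_eq_0_if_noncollinear assms(1-7) by blast
  then show ?thesis
    using assms(10) by (auto simp: less_2_cases_iff)
qed

text \<open>linf (pullback_coeffs T w) is linf w composed with the linear map x^k = T k c y^c.\<close>
definition pullback_coeffs :: "(nat \<Rightarrow> nat \<Rightarrow> real) \<Rightarrow> real \<times> real \<Rightarrow> real \<times> real" where
  "pullback_coeffs T w = (fst w * T 0 0 + snd w * T 1 0, fst w * T 0 1 + snd w * T 1 1)"

lemma pullback_exponent_affine_identity:
  assumes "qe_exponent M r' w" "qe_exponent C r (pullback_coeffs T w)" "a < 2" "b < 2"
  shows "fst w * ((\<Sum>c<2. C a b c * T 0 c) - (\<Sum>i<2. \<Sum>j<2. M i j 0 * T i a * T j b))
       + snd w * ((\<Sum>c<2. C a b c * T 1 c) - (\<Sum>i<2. \<Sum>j<2. M i j 1 * T i a * T j b))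
       + ((\<Sum>i<2. \<Sum>j<2. r' i j * T i a * T j b) - r a b) = 0"
proof -
  obtain x y where w: "w = (x, y)"
    by (cases w)
  have M: "x * x = M 0 0 0 * x + M 0 0 1 * y - r' 0 0"
      "x * y = M 0 1 0 * x + M 0 1 1 * y - r' 0 1"
      "y * x = M 1 0 0 * x + M 1 0 1 * y - r' 1 0"
      "y * y = M 1 1 0 * x + M 1 1 1 * y - r' 1 1"
    using assms(1) by (simp_all add: w qe_exponent_iff)
  have coord_pullback: "coord (pullback_coeffs T w) d = x * T 0 d + y * T 1 d" if "d < 2" for d
    using that by (auto simp: w pullback_coeffs_def coord_def less_2_cases_iff)
  have "(x * T 0 a + y * T 1 a) * (x * T 0 b + y * T 1 b)
      = C a b 0 * (x * T 0 0 + y * T 1 0) + C a b 1 * (x * T 0 1 + y * T 1 1) - r a b"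
    using qe_exponentD[OF assms(2-4)]
    unfolding coord_pullback[OF assms(3)] coord_pullback[OF assms(4)]
    by (simp add: w pullback_coeffs_def)
  moreover have "(x * T 0 a + y * T 1 a) * (x * T 0 b + y * T 1 b)
      = (x * x) * T 0 a * T 0 b + (x * y) * T 0 a * T 1 b
        + (y * x) * T 1 a * T 0 b + (y * y) * T 1 a * T 1 b"
    by (simp add: algebra_simps)
  ultimately show ?thesis
    unfolding M by (simp add: w sum_lessThan_2 algebra_simps)
qed

lemma lin_equiv_if_pullback_exponents:
  assumes "det3 w1 w2 w3 \<noteq> 0" "T 0 0 * T 1 1 - T 0 1 * T 1 0 \<noteq> 0"
    and "qe_exponent M r' w1" "qe_exponent M r' w2" "qe_exponent M r' w3"
    and "qe_exponent C r (pullback_coeffs T w1)" "qe_exponent C r (pullback_coeffs T w2)"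
      "qe_exponent C r (pullback_coeffs T w3)"
  shows "lin_equiv C M"
  unfolding lin_equiv_def
proof (intro exI[of _ T] conjI allI impI)
  fix a b k :: nat
  assume "a < 2" "b < 2" "k < 2"
  then show "(\<Sum>c<2. C a b c * T k c) = (\<Sum>i<2. \<Sum>j<2. M i j k * T i a * T j b)"
    using affine_form_eq_0_if_noncollinear[OF assms(1)
        pullback_exponent_affine_identity[OF assms(3,6)]
        pullback_exponent_affine_identity[OF assms(4,7)]
        pullback_exponent_affine_identity[OF assms(5,8)]]
    by (auto simp: less_2_cases_iff)
qed (fact assms(2))

lemma qe_exponents_Gamma_20:
  "qe_exponent Gamma_20 (\<lambda>i j. 0) (0, 0)"
  "qe_exponent Gamma_20 (\<lambda>i j. 0) (-1, 0)"
  "qe_exponent Gamma_20 (\<lambda>i j. 0) (0, 1)"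
  by (simp_all add: qe_exponent_iff Gamma_20_def Gam_def)

lemma qe_exponents_Gamma_21:
  fixes c :: real
  defines "r \<equiv> \<lambda>i j. if i = 1 \<and> j = 1 then c\<^sup>2 + c else 0"
  shows "qe_exponent (Gamma_21 c) r (0, c)"
    and "qe_exponent (Gamma_21 c) r (0, c + 1)"
    and "qe_exponent (Gamma_21 c) r (-1, c)"
  by (simp_all add: r_def qe_exponent_iff Gamma_21_def Gam_def power2_eq_square algebra_simps)

lemma qe_exponents_Gamma_r2:
  fixes a1 a2 :: real
  assumes "a1 + a2 \<noteq> 1"
  defines "r \<equiv> \<lambda>i j. (if i = 0 \<and> j = 0 then a1\<^sup>2 - a1 else if i = 1 \<and> j = 1 then a2\<^sup>2 - a2
    else a1 * a2) / (a1 + a2 - 1)"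
  shows "qe_exponent (Gamma_r2 a1 a2) r (1, 0)"
    and "qe_exponent (Gamma_r2 a1 a2) r (0, 1)"
    and "qe_exponent (Gamma_r2 a1 a2) r (a1, a2)"
proof -
  define s where "s = a1 + a2 - 1"
  have "s \<noteq> 0"
    using assms(1) by (simp add: s_def)
  moreover have "Gamma_r2 a1 a2 = (\<lambda>i j k.
      Gam (a1\<^sup>2 + a2 - 1) (a1\<^sup>2 - a1) (a1 * a2) (a1 * a2) (a2\<^sup>2 - a2) (a1 + a2\<^sup>2 - 1) i j k / s)"
    by (simp add: Gamma_r2_def s_def fun_eq_iff)
  ultimately show "qe_exponent (Gamma_r2 a1 a2) r (1, 0)" "qe_exponent (Gamma_r2 a1 a2) r (0, 1)"
    "qe_exponent (Gamma_r2 a1 a2) r (a1, a2)"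
    unfolding r_def s_def[symmetric]
    by (simp_all add: qe_exponent_iff Gam_def field_simps) (simp_all add: s_def power2_eq_square algebra_simps)
qed

lemma lin_equiv_Gamma_20_if_zero_exponent:
  assumes "v1 = (0, 0)" "det3 v1 v2 v3 \<noteq> 0"
    and "qe_exponent C r v1" "qe_exponent C r v2" "qe_exponent C r v3"
  shows "lin_equiv C Gamma_20"
proof -
  define T where "T = (\<lambda>k c. if k = (0::nat) then - coord v2 c else coord v3 c)"
  have pullback: "pullback_coeffs T (0, 0) = v1" "pullback_coeffs T (-1, 0) = v2"
    "pullback_coeffs T (0, 1) = v3"
    using assms(1) by (simp_all add: pullback_coeffs_def T_def coord_def)
  have "T 0 0 * T 1 1 - T 0 1 * T 1 0 \<noteq> 0"
    using assms(1,2) by (simp add: T_def coord_def det3_def algebra_simps)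
  then show ?thesis
    by (intro lin_equiv_if_pullback_exponents[where T = T and C = C and r = r,
        OF _ _ qe_exponents_Gamma_20]) (simp_all add: pullback assms(3-5) det3_def)
qed

lemma dependent_pair_multiple_of_difference:
  fixes x1 y1 x2 y2 :: real
  assumes "x1 * y2 = y1 * x2" "(x1, y1) \<noteq> (x2, y2)"
  obtains c where "x1 = c * (x2 - x1)" "y1 = c * (y2 - y1)"
proof
  define w1 w2 where "w1 = x2 - x1" and "w2 = y2 - y1"
  have norm_w: "w1\<^sup>2 + w2\<^sup>2 \<noteq> 0"
    using assms(2) by (auto simp: w1_def w2_def sum_power2_eq_zero_iff)
  have "x1 * w2 = y1 * w1"
    using assms(1) by (simp add: w1_def w2_def algebra_simps)
  then have "x1 * (w1\<^sup>2 + w2\<^sup>2) = (x1 * w1 + y1 * w2) * w1"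
    and "y1 * (w1\<^sup>2 + w2\<^sup>2) = (x1 * w1 + y1 * w2) * w2"
    by (simp_all add: power2_eq_square algebra_simps)
  with norm_w show "x1 = (x1 * w1 + y1 * w2) / (w1\<^sup>2 + w2\<^sup>2) * (x2 - x1)"
    and "y1 = (x1 * w1 + y1 * w2) / (w1\<^sup>2 + w2\<^sup>2) * (y2 - y1)"
    by (simp_all add: w1_def[symmetric] w2_def[symmetric] field_simps)
qed

lemma lin_equiv_Gamma_21_if_dependent_exponents:
  assumes "v1 \<noteq> (0, 0)" "v2 \<noteq> (0, 0)" "fst v1 * snd v2 = snd v1 * fst v2"
    and "det3 v1 v2 v3 \<noteq> 0"
    and "qe_exponent C r v1" "qe_exponent C r v2" "qe_exponent C r v3"
  shows "\<exists>c. c \<noteq> -1 \<and> c \<noteq> 0 \<and> lin_equiv C (Gamma_21 c)"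
proof -
  obtain x1 y1 x2 y2 where v: "v1 = (x1, y1)" "v2 = (x2, y2)"
    by (cases v1, cases v2)
  have "v1 \<noteq> v2"
    using assms(4) by (auto simp: det3_def algebra_simps)
  then obtain c where c: "x1 = c * (x2 - x1)" "y1 = c * (y2 - y1)"
    using assms(3) by (auto simp: v intro: dependent_pair_multiple_of_difference)
  have "c \<noteq> 0"
    using assms(1) c by (auto simp: v)
  moreover have "c \<noteq> -1"
    using assms(2) c by (auto simp: v algebra_simps)
  moreover have "lin_equiv C (Gamma_21 c)"
  proof -
    define T where "T = (\<lambda>k i. if k = (0::nat) then coord v1 i - coord v3 i
      else if i = 0 then x2 - x1 else y2 - y1)"
    have pullback: "pullback_coeffs T (0, c) = v1" "pullback_coeffs T (0, c + 1) = v2"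
      "pullback_coeffs T (-1, c) = v3"
      using c by (simp_all add: v pullback_coeffs_def T_def coord_def prod_eq_iff algebra_simps)
    have "T 0 0 * T 1 1 - T 0 1 * T 1 0 = det3 v1 v2 v3"
      by (simp add: v T_def coord_def det3_def algebra_simps)
    with assms(4) show ?thesis
      by (intro lin_equiv_if_pullback_exponents[where T = T and C = C and r = r,
          OF _ _ qe_exponents_Gamma_21]) (simp_all add: pullback assms(5-7) det3_def)
  qed
  ultimately show ?thesis
    by blast
qed

lemma lin_equiv_Gamma_r2_if_independent_exponents:
  assumes "fst v1 * snd v2 \<noteq> snd v1 * fst v2" "fst v1 * snd v3 \<noteq> snd v1 * fst v3"
    "fst v2 * snd v3 \<noteq> snd v2 * fst v3"
    and "det3 v1 v2 v3 \<noteq> 0"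
    and "qe_exponent C r v1" "qe_exponent C r v2" "qe_exponent C r v3"
  shows "\<exists>a1 a2. a1 + a2 \<noteq> 1 \<and> a1 * a2 \<noteq> 0 \<and> lin_equiv C (Gamma_r2 a1 a2)"
proof -
  obtain x1 y1 x2 y2 x3 y3 where v: "v1 = (x1, y1)" "v2 = (x2, y2)" "v3 = (x3, y3)"
    by (cases v1, cases v2, cases v3)
  define d where "d = x1 * y2 - y1 * x2"
  have "d \<noteq> 0"
    using assms(1) by (simp add: v d_def)
  text \<open>Cramer's rule for v3 = a1 v1 + a2 v2.\<close>
  define a1 a2 where "a1 = (x3 * y2 - y3 * x2) / d" and "a2 = (x1 * y3 - y1 * x3) / d"
  have a1_d: "a1 * d = x3 * y2 - y3 * x2" and a2_d: "a2 * d = x1 * y3 - y1 * x3"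
    using \<open>d \<noteq> 0\<close> by (simp_all add: a1_def a2_def)
  have "(a1 + a2 - 1) * d = a1 * d + a2 * d - d"
    by (simp add: algebra_simps)
  also have "\<dots> = - det3 v1 v2 v3"
    unfolding a1_d a2_d by (simp add: v d_def det3_def algebra_simps)
  finally have "(a1 + a2 - 1) * d = - det3 v1 v2 v3" .
  then have "a1 + a2 \<noteq> 1"
    using assms(4) by auto
  moreover have "a1 * a2 \<noteq> 0"
  proof
    assume "a1 * a2 = 0"
    then have "a1 * d = 0 \<or> a2 * d = 0"
      by (metis mult_eq_0_iff)
    then show False
      using assms(2,3) unfolding a1_d a2_d by (auto simp: v algebra_simps)
  qed
  moreover have "lin_equiv C (Gamma_r2 a1 a2)"
  proof -
    define T where "T = (\<lambda>k. if k = (0::nat) then coord v1 else coord v2)"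
    have "(a1 * x1 + a2 * x2) * d = (a1 * d) * x1 + (a2 * d) * x2"
      by (simp add: algebra_simps)
    also have "\<dots> = x3 * d"
      unfolding a1_d a2_d by (simp add: d_def algebra_simps)
    finally have x3: "(a1 * x1 + a2 * x2) * d = x3 * d" .
    have "(a1 * y1 + a2 * y2) * d = (a1 * d) * y1 + (a2 * d) * y2"
      by (simp add: algebra_simps)
    also have "\<dots> = y3 * d"
      unfolding a1_d a2_d by (simp add: d_def algebra_simps)
    finally have "(a1 * y1 + a2 * y2) * d = y3 * d" .
    with x3 have "pullback_coeffs T (a1, a2) = v3"
      using \<open>d \<noteq> 0\<close> by (simp add: v pullback_coeffs_def T_def coord_def)
    moreover have "pullback_coeffs T (1, 0) = v1" "pullback_coeffs T (0, 1) = v2"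
      by (simp_all add: v pullback_coeffs_def T_def coord_def)
    ultimately have pullback: "pullback_coeffs T (1, 0) = v1" "pullback_coeffs T (0, 1) = v2"
      "pullback_coeffs T (a1, a2) = v3"
      by simp_all
    have "T 0 0 * T 1 1 - T 0 1 * T 1 0 \<noteq> 0"
      using \<open>d \<noteq> 0\<close> by (simp add: v T_def coord_def d_def)
    with \<open>a1 + a2 \<noteq> 1\<close> show ?thesis
      by (intro lin_equiv_if_pullback_exponents[where T = T and C = C and r = r,
          OF _ _ qe_exponents_Gamma_r2[OF \<open>a1 + a2 \<noteq> 1\<close>]])
        (simp_all add: pullback assms(5-7) det3_def)
  qed
  ultimately show ?thesis
    by blast
qed

lemma lin_equiv_normal_form_if_noncollinear_qe_exponents:
  assumes "qe_exponent C r v1" "qe_exponent C r v2" "qe_exponent C r v3"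
    and "det3 v1 v2 v3 \<noteq> 0"
  shows "(\<exists>a1 a2. a1 + a2 \<noteq> 1 \<and> a1 * a2 \<noteq> 0 \<and> lin_equiv C (Gamma_r2 a1 a2)) \<or>
    (\<exists>c. c \<noteq> -1 \<and> c \<noteq> 0 \<and> lin_equiv C (Gamma_21 c)) \<or>
    lin_equiv C Gamma_20"
proof -
  have permuted: "det3 v2 v1 v3 \<noteq> 0" "det3 v1 v3 v2 \<noteq> 0" "det3 v3 v1 v2 \<noteq> 0"
    "det3 v2 v3 v1 \<noteq> 0"
    using assms(4) by (simp_all add: det3_def algebra_simps)
  consider "v1 = (0, 0) \<or> v2 = (0, 0) \<or> v3 = (0, 0)"
    | "v1 \<noteq> (0, 0)" "v2 \<noteq> (0, 0)" "v3 \<noteq> (0, 0)"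
      "fst v1 * snd v2 = snd v1 * fst v2 \<or> fst v1 * snd v3 = snd v1 * fst v3
        \<or> fst v2 * snd v3 = snd v2 * fst v3"
    | "fst v1 * snd v2 \<noteq> snd v1 * fst v2" "fst v1 * snd v3 \<noteq> snd v1 * fst v3"
      "fst v2 * snd v3 \<noteq> snd v2 * fst v3"
    by blast
  then show ?thesis
  proof cases
    case 1
    then have "lin_equiv C Gamma_20"
      using lin_equiv_Gamma_20_if_zero_exponent[OF _ assms(4) assms(1-3)]
        lin_equiv_Gamma_20_if_zero_exponent[OF _ permuted(1) assms(2,1,3)]
        lin_equiv_Gamma_20_if_zero_exponent[OF _ permuted(3) assms(3,1,2)]
      by blast
    then show ?thesis
      by blast
  next
    case 2
    then have "\<exists>c. c \<noteq> -1 \<and> c \<noteq> 0 \<and> lin_equiv C (Gamma_21 c)"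
      using lin_equiv_Gamma_21_if_dependent_exponents[OF _ _ _ assms(4) assms(1-3)]
        lin_equiv_Gamma_21_if_dependent_exponents[OF _ _ _ permuted(2) assms(1,3,2)]
        lin_equiv_Gamma_21_if_dependent_exponents[OF _ _ _ permuted(4) assms(2,3,1)]
      by blast
    then show ?thesis
      by blast
  next
    case 3
    then show ?thesis
      using lin_equiv_Gamma_r2_if_independent_exponents[OF _ _ _ assms(4) assms(1-3)] by blast
  qed
qed

theorem theorem2p5:
  fixes U :: "(real \<times> real) set"
    and G :: "nat \<Rightarrow> nat \<Rightarrow> nat \<Rightarrow> real \<times> real \<Rightarrow> real"
    and u1 u2 u3 :: "real \<times> real"
  assumes "open U" and "connected U"
    and "\<forall>i<2. \<forall>j<2. \<forall>k<2. smooth_on2 U (G i j k)"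
    and "\<forall>i<2. \<forall>j<2. \<forall>k<2. \<forall>p\<in>U. G i j k p = G j i k p"
    and "u1 \<noteq> u2" and "u1 \<noteq> u3" and "u2 \<noteq> u3"
    and "(\<lambda>p. exp (linf u1 p)) \<in> QE U G"
    and "(\<lambda>p. exp (linf u2 p)) \<in> QE U G"
    and "(\<lambda>p. exp (linf u3 p)) \<in> QE U G"
    and "\<forall>c1 c2 c3 :: real. (\<forall>p\<in>U. c1 * exp (linf u1 p) + c2 * exp (linf u2 p) + c3 * exp (linf u3 p) = 0)
           \<longrightarrow> c1 = 0 \<and> c2 = 0 \<and> c3 = 0"
    and "\<forall>f\<in>QE U G. \<exists>c1 c2 c3 :: real. \<forall>p\<in>U.
           f p = c1 * exp (linf u1 p) + c2 * exp (linf u2 p) + c3 * exp (linf u3 p)"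
  shows "\<exists>C :: nat \<Rightarrow> nat \<Rightarrow> nat \<Rightarrow> real.
           (\<forall>i<2. \<forall>j<2. \<forall>k<2. \<forall>p\<in>U. G i j k p = C i j k) \<and>
           ((\<exists>a1 a2. a1 + a2 \<noteq> 1 \<and> a1 * a2 \<noteq> 0 \<and> lin_equiv C (Gamma_r2 a1 a2)) \<or>
            (\<exists>c. c \<noteq> -1 \<and> c \<noteq> 0 \<and> lin_equiv C (Gamma_21 c)) \<or>
            lin_equiv C Gamma_20)"
proof -
  text \<open>The argument is pointwise: besides the three memberships in QE U G and distinctness,
    it only needs U \<noteq> {}, which follows from the independence hypothesis.\<close>
  obtain p0 where "p0 \<in> U"
    using assms(11) by force
  have exponents_at: "qe_exponent (\<lambda>a b c. G a b c p) (\<lambda>a b. ricci_s G a b p) u"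
    if "p \<in> U" "u \<in> {u1, u2, u3}" for p u
    using qe_exponent_if_exp_linf_QE[OF _ that(1)] assms(8-10) that(2) by blast
  define C where "C = (\<lambda>a b c. G a b c p0)"
  have noncollinear: "det3 u1 u2 u3 \<noteq> 0"
    using qe_exponents_noncollinear exponents_at[OF \<open>p0 \<in> U\<close>] assms(5-7) by blast
  have "\<forall>i<2. \<forall>j<2. \<forall>k<2. \<forall>p\<in>U. G i j k p = C i j k"
    unfolding C_def
    using qe_exponents_determine_symbols[OF noncollinear] exponents_at \<open>p0 \<in> U\<close> by blast
  moreover have "(\<exists>a1 a2. a1 + a2 \<noteq> 1 \<and> a1 * a2 \<noteq> 0 \<and> lin_equiv C (Gamma_r2 a1 a2)) \<or>
      (\<exists>c. c \<noteq> -1 \<and> c \<noteq> 0 \<and> lin_equiv C (Gamma_21 c)) \<or> lin_equiv C Gamma_20"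
    unfolding C_def
    using lin_equiv_normal_form_if_noncollinear_qe_exponents exponents_at[OF \<open>p0 \<in> U\<close>]
      noncollinear by blast
  ultimately show ?thesis
    by blast
qed

end
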